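(* Let $P\subset\mathbb{R}^d$ be a full-dimensional lattice polytope with facet presentation $P=\{x: n_F(x)\ge -h_F \ \forall F\in\mathcal{F}(P)\}$ and codegree $a$. Then: (1) $\lfloor aP\rfloor \subseteq \{x\in\mathbb{R}^d : n_F(x)\ge 1-ah_F \text{ for all } F\in\mathcal{F}(P)\}$; (2) $\{P\}\subseteq \{x\in\mathbb{R}^d: n_F(x)\ge (a-1)h_F-1 \text{ for all } F\in\mathcal{F}(P)\}$; (3) if $P$ is nearly Gorenstein, then $P\cap\mathbb{Z}^d = (\lfloor aP\rfloor\cap\mathbb{Z}^d) + (\{P\}\cap\mathbb{Z}^d)$; (4) if $P$ has the integer decomposition property and $P\cap\mathbb{Z}^d = (\lfloor aP\rfloor\cap\mathbb{Z}^d) + (\{P\}\cap\mathbb{Z}^d)$, then $P$ is nearly Gorenstein.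
   Context: $\mathbf{k}$ is an infinite field. $\mathcal{F}(P)$ is the set of facets of $P$; $n_F\in(\mathbb{Z}^d)^*$ is the primitive inner normal of $F$ and $h_F\in\mathbb{Z}$. The codegree is $a=\min\{k\in\mathbb{Z}_{\ge1}: \mathrm{int}(kP)\cap\mathbb{Z}^d\ne\varnothing\}$. For a lattice polytope $Q$, the floor polytope is $\lfloor Q\rfloor=\mathrm{conv}(\mathrm{int}(Q)\cap\mathbb{Z}^d)$. The remainder polytope of $P$ is $\{P\}=\mathrm{conv}\{x\in\mathbb{Z}^d: n_F(x)\ge (a-1)h_F-1\ \forall F\in\mathcal{F}(P)\}$. The Ehrhart ring is $A(P)=\mathbf{k}[\mathbf{t}^xs^k: k\in\mathbb{N}, x\in kP\cap\mathbb{Z}^d]$ graded by $k$, with graded maximal ideal $\mathbf{m}$ and canonical module $\omega$; $P$ is nearly Gorenstein if $\mathbf{m}\subseteq\mathrm{tr}(\omega)=\sum_{\phi\in\mathrm{Hom}(\omega,A(P))}\phi(\omega)$. $P$ has the integer decomposition property if for every $k\ge1$ every lattice point of $kP$ is a sum of $k$ lattice points of $P$. *)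

theory Defs
  imports "HOL-Analysis.Analysis" "HOL-Library.Poly_Mapping"
begin

definition lattice_pts :: "(real^'n) set" where
  "lattice_pts = {x. \<forall>i. x $ i \<in> \<int>}"

definition rvec :: "int^'n \<Rightarrow> real^'n" where
  "rvec u = (\<chi> i. real_of_int (u $ i))"

definition lattice_polytope :: "(real^'n) set \<Rightarrow> bool" where
  "lattice_polytope P \<longleftrightarrow> (\<exists>S. finite S \<and> S \<subseteq> lattice_pts \<and> P = convex hull S)"

definition lfun :: "int^'n \<Rightarrow> real^'n \<Rightarrow> real" where
  "lfun u x = (\<Sum>i\<in>UNIV. real_of_int (u $ i) * x $ i)"

definition is_prim_inner_normal :: "(real^'n) set \<Rightarrow> (real^'n) set \<Rightarrow> int^'n \<Rightarrow> bool" where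
  "is_prim_inner_normal P F u \<longleftrightarrow>
     Gcd ((\<lambda>i. u $ i) ` UNIV) = 1 \<and>
     (\<exists>c. (\<forall>x\<in>P. c \<le> lfun u x) \<and> F = {x\<in>P. lfun u x = c})"

definition nF :: "(real^'n) set \<Rightarrow> (real^'n) set \<Rightarrow> int^'n" where
  "nF P F = (THE u. is_prim_inner_normal P F u)"

text \<open>h_F such that P = {x. n_F(x) >= - h_F for all facets F}.\<close>
definition hF :: "(real^'n) set \<Rightarrow> (real^'n) set \<Rightarrow> real" where
  "hF P F = - (INF x\<in>P. lfun (nF P F) x)"

definition codegree :: "(real^'n) set \<Rightarrow> nat" where
  "codegree P = (LEAST k::nat. 1 \<le> k \<and> interior ((\<lambda>v. real k *\<^sub>R v) ` P) \<inter> lattice_pts \<noteq> {})"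

definition floor_poly :: "(real^'n) set \<Rightarrow> (real^'n) set" where
  "floor_poly Q = convex hull (interior Q \<inter> lattice_pts)"

definition remainder_poly :: "(real^'n) set \<Rightarrow> (real^'n) set" where
  "remainder_poly P = convex hull {x\<in>lattice_pts. \<forall>F. F facet_of P \<longrightarrow>
      lfun (nF P F) x \<ge> (real (codegree P) - 1) * hF P F - 1}"

definition IDP :: "(real^'n) set \<Rightarrow> bool" where
  "IDP P \<longleftrightarrow> (\<forall>k::nat. 1 \<le> k \<longrightarrow> (\<forall>x\<in>(\<lambda>v. real k *\<^sub>R v) ` P \<inter> lattice_pts.
      \<exists>xs. length xs = k \<and> set xs \<subseteq> P \<inter> lattice_pts \<and> sum_list xs = x))"

text \<open>The monomial t^x s^k is the exponent (x,k). Elements of k[Z^d x N] are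
  finitely supported functions (poly_mapping) with convolution product.\<close>

definition cone_pts :: "(real^'n) set \<Rightarrow> ((int^'n) \<times> nat) set" where
  "cone_pts P = {(x,k). rvec x \<in> (\<lambda>v. real k *\<^sub>R v) ` P}"

definition int_cone_pts :: "(real^'n) set \<Rightarrow> ((int^'n) \<times> nat) set" where
  "int_cone_pts P = {(x,k). 1 \<le> k \<and> rvec x \<in> interior ((\<lambda>v. real k *\<^sub>R v) ` P)}"

definition ehrhart_ring :: "'k itself \<Rightarrow> (real^'n) set \<Rightarrow> (((int^'n) \<times> nat) \<Rightarrow>\<^sub>0 'k::field) set" where
  "ehrhart_ring _ P = {f. Poly_Mapping.keys f \<subseteq> cone_pts P}"

definition max_ideal :: "'k itself \<Rightarrow> (real^'n) set \<Rightarrow> (((int^'n) \<times> nat) \<Rightarrow>\<^sub>0 'k::field) set" where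
  "max_ideal _ P = {f. Poly_Mapping.keys f \<subseteq> cone_pts P \<and> Poly_Mapping.lookup f (0,0) = 0}"

text \<open>Canonical module, realised (Danilov-Stanley) as the ideal spanned by
  the monomials in the interior of the cone.\<close>
definition canonical_module :: "'k itself \<Rightarrow> (real^'n) set \<Rightarrow> (((int^'n) \<times> nat) \<Rightarrow>\<^sub>0 'k::field) set" where
  "canonical_module _ P = {f. Poly_Mapping.keys f \<subseteq> int_cone_pts P}"

definition hom_omega :: "'k itself \<Rightarrow> (real^'n) set \<Rightarrow>
   ((((int^'n) \<times> nat) \<Rightarrow>\<^sub>0 'k::field) \<Rightarrow> (((int^'n) \<times> nat) \<Rightarrow>\<^sub>0 'k)) set" where
  "hom_omega K P = {\<phi>.
      (\<forall>w\<in>canonical_module K P. \<phi> w \<in> ehrhart_ring K P) \<and>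
      (\<forall>v\<in>canonical_module K P. \<forall>w\<in>canonical_module K P. \<phi> (v + w) = \<phi> v + \<phi> w) \<and>
      (\<forall>r\<in>ehrhart_ring K P. \<forall>w\<in>canonical_module K P. \<phi> (r * w) = r * \<phi> w)}"

definition trace_omega :: "'k itself \<Rightarrow> (real^'n) set \<Rightarrow> (((int^'n) \<times> nat) \<Rightarrow>\<^sub>0 'k::field) set" where
  "trace_omega K P = {sum_list (map (\<lambda>(\<phi>, w). \<phi> w) l) | l.
      set l \<subseteq> hom_omega K P \<times> canonical_module K P}"

definition nearly_gorenstein :: "'k::field itself \<Rightarrow> (real^'n) set \<Rightarrow> bool" where
  "nearly_gorenstein K P \<longleftrightarrow> max_ideal K P \<subseteq> trace_omega K P"

end

theory Submission
  imports Defs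
begin

text \<open>
  Parts (1) and (2) hold because both right-hand sides are convex and contain the lattice points
  spanning the polytopes on the left: an interior lattice point of \<open>aP\<close> satisfies
  \<open>n\<^sub>F(x) > -a h\<^sub>F\<close>, hence \<open>n\<^sub>F(x) \<ge> 1 - a h\<^sub>F\<close> by integrality.

  For (3), a monomial \<open>t\<^sup>x s\<close> with \<open>x \<in> P\<close> lies in the trace of \<open>\<omega>\<close>, so it occurs in some
  \<open>\<phi>(w)\<close>. Since \<open>\<phi>\<close> is \<open>A(P)\<close>-linear and \<open>\<omega> \<subseteq> A(P)\<close>, \<open>t\<^sup>z s\<^sup>a \<phi>(w) = w \<phi>(t\<^sup>z s\<^sup>a)\<close> for an interior
  lattice point \<open>z\<close> of \<open>aP\<close>; this writes \<open>(x, 1) + (z, a) = v + t\<close> with \<open>v\<close> an interior cone point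
  (of degree at least \<open>a\<close>) and \<open>t\<close> an exponent of \<open>\<phi>(t\<^sup>z s\<^sup>a)\<close>. Testing \<open>\<phi>\<close> against interior lattice
  points at lattice distance one from a facet shows \<open>n\<^sub>F(t - (z, a)) \<ge> -deg(t - (z, a)) h\<^sub>F - 1\<close>, and
  the two possible degrees of \<open>t\<close> each yield the required decomposition of \<open>x\<close>.

  For (4), multiplication by \<open>t\<^sup>y s\<^sup>1\<^sup>-\<^sup>a\<close> maps \<open>\<omega>\<close> into \<open>A(P)\<close> for every lattice point \<open>y\<close>
  of \<open>{P}\<close>. Given a monomial \<open>t\<^sup>x s\<^sup>j\<close> of the maximal ideal, the integer decomposition
  property splits off a lattice point \<open>x' + y\<close> of \<open>P\<close>, and
  \<open>t\<^sup>x s\<^sup>j = t\<^sup>y s\<^sup>1\<^sup>-\<^sup>a \<cdot> t\<^sup>x\<^sup>-\<^sup>y s\<^sup>a\<^sup>+\<^sup>j\<^sup>-\<^sup>1\<close> with the second factor in \<open>\<omega>\<close>.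
\<close>

lemma lfun_eq_inner: "lfun u x = rvec u \<bullet> x"
  by (simp add: lfun_def rvec_def inner_vec_def)

lemma lfun_add: "lfun u (x + y) = lfun u x + lfun u y"
  by (simp add: lfun_eq_inner inner_add_right)

lemma lfun_diff: "lfun u (x - y) = lfun u x - lfun u y"
  by (simp add: lfun_eq_inner inner_diff_right)

lemma lfun_uminus: "lfun u (- x) = - lfun u x"
  by (simp add: lfun_eq_inner)

lemma lfun_scaleR: "lfun u (c *\<^sub>R x) = c * lfun u x"
  by (simp add: lfun_eq_inner)

lemma lfun_sum: "lfun u (sum f A) = (\<Sum>a\<in>A. lfun u (f a))"
  by (simp add: lfun_eq_inner inner_sum_right)

lemma lfun_rvec: "lfun u (rvec z) = of_int (\<Sum>i\<in>UNIV. u $ i * z $ i)"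
  by (simp add: lfun_def rvec_def)

lemma lfun_lattice_pts_Ints: "x \<in> lattice_pts \<Longrightarrow> lfun u x \<in> \<int>"
  unfolding lfun_def lattice_pts_def by (auto intro!: Ints_sum Ints_mult)

lemma rvec_nth [simp]: "rvec u $ i = real_of_int (u $ i)"
  by (simp add: rvec_def)

lemma rvec_eq_iff: "rvec u = rvec v \<longleftrightarrow> u = v"
  by (auto simp: vec_eq_iff)

lemma rvec_eq_0_iff [simp]: "rvec u = 0 \<longleftrightarrow> u = 0"
  by (auto simp: vec_eq_iff)

lemma rvec_add [simp]: "rvec (u + v) = rvec u + rvec v"
  and rvec_diff [simp]: "rvec (u - v) = rvec u - rvec v"
  and rvec_uminus [simp]: "rvec (- u) = - rvec u"
  and rvec_zero [simp]: "rvec 0 = 0"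
  by (simp_all add: vec_eq_iff)

lemma rvec_scaleR: "rvec (c *s u) = real_of_int c *\<^sub>R rvec u"
  by (simp add: vec_eq_iff)

lemma lattice_pts_eq_range_rvec: "lattice_pts = range rvec"
proof
  show "range rvec \<subseteq> lattice_pts" by (auto simp: lattice_pts_def)
  show "lattice_pts \<subseteq> range rvec"
  proof
    fix x :: "real^'n" assume "x \<in> lattice_pts"
    then have "\<forall>i. \<exists>n. x $ i = of_int n" by (auto simp: lattice_pts_def elim!: Ints_cases)
    then obtain f where "\<forall>i. x $ i = of_int (f i)" by metis
    then have "x = rvec (\<chi> i. f i)" by (simp add: vec_eq_iff)
    then show "x \<in> range rvec" by blast
  qed
qed

lemma rvec_in_lattice_pts [simp]: "rvec u \<in> lattice_pts"
  by (simp add: lattice_pts_eq_range_rvec)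

lemma Ints_less_imp_add_one_le:
  fixes x y :: real
  assumes "x \<in> \<int>" "y \<in> \<int>" "x < y"
  shows "x + 1 \<le> y"
  using assms by (auto elim!: Ints_cases)

section \<open>Facets of full-dimensional polyhedra\<close>

lemma facet_affine_hull:
  fixes S :: "'a::euclidean_space set"
  assumes "interior S \<noteq> {}" "C facet_of S" "a \<noteq> 0" "C = S \<inter> {x. a \<bullet> x = b}"
  shows "affine hull C = {x. a \<bullet> x = b}"
proof (rule affine_dim_equal)
  have "aff_dim C = DIM('a) - 1" and "C \<noteq> {}"
    using assms(1,2) aff_dim_nonempty_interior by (auto simp: facet_of_def)
  then show "aff_dim (affine hull C) = aff_dim {x. a \<bullet> x = b}" "affine hull C \<noteq> {}"
    using assms(3) by (simp_all add: aff_dim_hyperplane)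
  show "affine hull C \<subseteq> {x. a \<bullet> x = b}"
    by (rule hull_minimal) (use assms(4) affine_hyperplane in auto)
qed (simp_all add: affine_hyperplane)

lemma orthogonal_complement_parallel:
  fixes a c :: "'a::euclidean_space"
  assumes "a \<noteq> 0" "\<And>y. a \<bullet> y = 0 \<Longrightarrow> c \<bullet> y = 0"
  shows "c = ((c \<bullet> a) / (a \<bullet> a)) *\<^sub>R a"
proof -
  define v where "v = c - ((c \<bullet> a) / (a \<bullet> a)) *\<^sub>R a"
  have "a \<bullet> v = 0"
    using assms(1) by (simp add: v_def inner_diff_right inner_commute)
  then have "c \<bullet> v = 0" and "a \<bullet> v = 0" using assms(2) by blast+
  then have "v \<bullet> v = 0" by (simp add: v_def inner_diff_left)
  then show ?thesis by (simp add: v_def)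
qed

lemma facet_normal_unique:
  fixes S :: "'a::euclidean_space set"
  assumes "interior S \<noteq> {}" "C facet_of S"
    and "a \<noteq> 0" "S \<subseteq> {x. a \<bullet> x \<le> b}" "C = S \<inter> {x. a \<bullet> x = b}"
    and "a' \<noteq> 0" "S \<subseteq> {x. a' \<bullet> x \<le> b'}" "C = S \<inter> {x. a' \<bullet> x = b'}"
  obtains l where "l > 0" "a' = l *\<^sub>R a" "b' = l * b"
proof -
  define l where "l = (a' \<bullet> a) / (a \<bullet> a)"
  obtain x0 where x0: "x0 \<in> C" using assms(2) by (auto simp: facet_of_def)
  have "a' \<bullet> y = 0" if "a \<bullet> y = 0" for y
  proof -
    have "x0 + y \<in> affine hull C" "x0 \<in> affine hull C"
      using x0 that assms(5) facet_affine_hull[OF assms(1-3,5)]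
      by (auto simp: inner_add_right)
    then show ?thesis
      using facet_affine_hull[OF assms(1,2,6,8)] by (simp add: inner_add_right)
  qed
  then have a': "a' = l *\<^sub>R a"
    unfolding l_def using orthogonal_complement_parallel assms(3) by blast
  moreover have b': "b' = l * b"
    using x0 assms(5,8) a' by auto
  moreover have "l > 0"
  proof -
    obtain p where p: "p \<in> interior S" using assms(1) by auto
    have "p \<in> interior {x. a \<bullet> x \<le> b}" "p \<in> interior {x. a' \<bullet> x \<le> b'}"
      using p interior_mono assms(4,7) by blast+
    then have "a \<bullet> p < b" "a' \<bullet> p < b'"
      using assms(3,6) by auto
    then have "a \<bullet> p < b" "l * (b - a \<bullet> p) > 0"
      using a' b' by (simp_all add: algebra_simps)
    then show ?thesis by (simp add: zero_less_mult_iff)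
  qed
  ultimately show ?thesis using that by blast
qed

lemma facet_of_subset_eq:
  assumes "F facet_of S" "G facet_of S" "F \<subseteq> G"
  shows "F = G"
proof (rule ccontr)
  assume "F \<noteq> G"
  have "F face_of G"
    using assms by (meson face_of_subset facet_of_imp_face_of facet_of_imp_subset)
  moreover have "convex G"
    using assms(2) face_of_imp_convex facet_of_imp_face_of by blast
  ultimately have "aff_dim F < aff_dim G"
    using face_of_aff_dim_lt \<open>F \<noteq> G\<close> by blast
  then show False using assms(1,2) by (simp add: facet_of_def)
qed

lemma polyhedron_facet_separation:
  fixes S :: "'a::euclidean_space set"
  assumes "polyhedron S" "interior S \<noteq> {}" "x \<notin> S"
  obtains C a b where "C facet_of S" "a \<noteq> 0" "S \<subseteq> {y. a \<bullet> y \<le> b}"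
    "C = S \<inter> {y. a \<bullet> y = b}" "a \<bullet> x > b"
proof -
  obtain H where fin: "finite H" and S_eq: "S = affine hull S \<inter> \<Inter>H"
    and halfspaces: "\<And>h. h \<in> H \<Longrightarrow> \<exists>a b. a \<noteq> 0 \<and> h = {x. a \<bullet> x \<le> b}"
    and minimal: "\<And>H'. H' \<subset> H \<Longrightarrow> S \<subset> affine hull S \<inter> \<Inter>H'"
    using assms(1) by (simp add: polyhedron_Int_affine_minimal) meson
  then obtain a b where ab: "\<And>h. h \<in> H \<Longrightarrow> a h \<noteq> 0 \<and> h = {x. a h \<bullet> x \<le> b h}"
    by metis
  have "affine hull S = UNIV"
    using assms(2) affine_hull_nonempty_interior by blast
  then obtain h where h: "h \<in> H" "x \<notin> h"
    using S_eq assms(3) by blast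
  define a0 b0 where "a0 = a h" and "b0 = b h"
  have h_eq: "h = {x. a0 \<bullet> x \<le> b0}" and "a0 \<noteq> 0"
    using ab h(1) by (simp_all add: a0_def b0_def)
  show ?thesis
  proof
    show "S \<inter> {y. a0 \<bullet> y = b0} facet_of S"
      using facet_of_polyhedron_explicit[OF fin S_eq ab minimal] h(1) by (auto simp: a0_def b0_def)
    show "S \<subseteq> {y. a0 \<bullet> y \<le> b0}" using S_eq h(1) h_eq by blast
    show "a0 \<noteq> 0" "a0 \<bullet> x > b0"
      using h(2) h_eq \<open>a0 \<noteq> 0\<close> by auto
  qed simp
qed

section \<open>Integral normal vectors\<close>

lemma det_row_linear:
  fixes A :: "'n::finite \<Rightarrow> real^'n"
  shows "det (\<chi> i. if i = i0 then y else A i) =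
           (\<chi> k. det (\<chi> i. if i = i0 then axis k 1 else A i)) \<bullet> y"
proof -
  have "det (\<chi> i. if i = i0 then y else A i) =
      det (\<chi> i. if i = i0 then (\<Sum>k\<in>UNIV. y $ k *s axis k 1) else A i)"
    by (simp only: basis_expansion)
  also have "\<dots> = (\<Sum>k\<in>UNIV. det (\<chi> i. if i = i0 then y $ k *s axis k (1::real) else A i))"
    by (rule det_linear_row_sum) simp
  also have "\<dots> = (\<Sum>k\<in>UNIV. y $ k * det (\<chi> i. if i = i0 then axis k (1::real) else A i))"
    by (rule sum.cong) (simp_all add: det_row_mul)
  finally show ?thesis by (simp add: inner_vec_def mult.commute)
qed

lemma det_Ints:
  fixes A :: "real^'n^'n"
  assumes "\<And>i j. A $ i $ j \<in> \<int>"
  shows "det A \<in> \<int>"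
  unfolding det_def by (intro Ints_sum Ints_mult Ints_of_int Ints_prod assms)

text \<open>The integral vector is the generalised cross product of the elements of \<open>B\<close>: the
  coefficient vector of the determinant as a linear function of the one missing row.\<close>

lemma integral_orthogonal_vector:
  fixes B :: "(real^'n) set"
  assumes B: "independent B" "card B = CARD('n) - 1" and B_Ints: "\<And>w i. w \<in> B \<Longrightarrow> w $ i \<in> \<int>"
  obtains c where "c \<noteq> 0" "\<And>i. c $ i \<in> \<int>" "\<And>w. w \<in> B \<Longrightarrow> c \<bullet> w = 0"
proof -
  obtain i0 :: 'n where True by blast
  have "finite B" using B(1) independent_bound by blast
  moreover have "card (UNIV - {i0}) = card B" using B(2) by (simp add: card_Diff_singleton)
  ultimately obtain \<sigma> where \<sigma>: "bij_betw \<sigma> (UNIV - {i0}) B"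
    by (metis finite_same_card_bij finite_Diff finite_class.finite_UNIV)
  define M where "M y = (\<chi> i. if i = i0 then y else \<sigma> i)" for y :: "real^'n"
  define c where "c = (\<chi> k. det (M (axis k 1)))"
  have det_M: "det (M y) = c \<bullet> y" for y
    unfolding M_def c_def by (rule det_row_linear)
  have rows_M: "rows (M y) = insert y B" for y
    using \<sigma> by (auto simp: M_def rows_def row_def bij_betw_def)
  have "c $ k \<in> \<int>" for k
    unfolding c_def vec_lambda_beta
    by (rule det_Ints) (use \<sigma> B_Ints in \<open>auto simp: M_def axis_def bij_betw_def\<close>)
  moreover have "c \<bullet> w = 0" if w: "w \<in> B" for w
  proof -
    obtain j where j: "j \<noteq> i0" "\<sigma> j = w"
      using \<sigma> w unfolding bij_betw_def by blast
    then have "det (M w) = 0"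
      by (intro det_identical_rows[of i0 j]) (auto simp: M_def row_def)
    then show ?thesis using det_M by simp
  qed
  moreover have "c \<noteq> 0"
  proof -
    have "dim (span B) < CARD('n)"
      using B by (simp add: dim_span dim_eq_card_independent)
    then have "span B \<noteq> UNIV"
      by (metis dim_span dim_UNIV DIM_cart DIM_real nat_mult_1_right order_less_irrefl)
    then obtain a where a: "a \<notin> span B" by blast
    then have "independent (insert a B)" "a \<notin> B"
      using B(1) span_base by (auto simp: independent_insert)
    then have "dim (rows (M a)) = CARD('n)"
      using B \<open>finite B\<close> by (simp add: rows_M dim_eq_card_independent)
    then have "det (M a) \<noteq> 0" by (simp add: det_eq_0_rank row_rank_def)
    then show ?thesis using det_M by auto
  qed
  ultimately show ?thesis using that by blast
qed

lemma primitive_vector_exists: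
  fixes v :: "int^'n"
  assumes "v \<noteq> 0"
  obtains g u where "g > 0" "Gcd ((\<lambda>i. u $ i) ` UNIV) = 1" "v = g *s u"
proof -
  define g where "g = Gcd ((\<lambda>i. v $ i) ` UNIV)"
  define u where "u = (\<chi> i. v $ i div g)"
  have v_eq: "v = g *s u"
    by (simp add: vec_eq_iff u_def g_def)
  have "g \<noteq> 0" using assms by (auto simp: g_def vec_eq_iff)
  then have "g > 0" by (simp add: g_def order_le_neq_trans)
  have "(\<lambda>i. v $ i) ` UNIV = (*) g ` (\<lambda>i. u $ i) ` UNIV"
    by (subst v_eq) auto
  then have "g = Gcd ((*) g ` (\<lambda>i. u $ i) ` UNIV)"
    by (simp only: g_def)
  also have "\<dots> = g * Gcd ((\<lambda>i. u $ i) ` UNIV)"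
    using \<open>g > 0\<close> by (simp add: Gcd_mult)
  finally show ?thesis using that \<open>g > 0\<close> v_eq by simp
qed

lemma primitive_vector_unique:
  fixes u u' :: "int^'n"
  assumes prim: "Gcd ((\<lambda>i. u $ i) ` UNIV) = 1" "Gcd ((\<lambda>i. u' $ i) ` UNIV) = 1"
    and parallel: "rvec u' = l *\<^sub>R rvec u" and "l > 0"
  shows "u' = u"
proof -
  have comp: "real_of_int (u' $ i) = l * real_of_int (u $ i)" for i
    using arg_cong[OF parallel, of "\<lambda>x. x $ i"] by simp
  have "u \<noteq> 0" using prim(1) by (auto simp: image_def)
  then obtain k where k: "u $ k \<noteq> 0" by (auto simp: vec_eq_iff)
  have cross: "u $ k * u' $ i = u' $ k * u $ i" for i
  proof -
    have "real_of_int (u $ k * u' $ i) = real_of_int (u' $ k * u $ i)"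
      using comp[of i] comp[of k] by simp
    then show ?thesis by (rule of_int_eq_iff[THEN iffD1])
  qed
  have "u $ k dvd Gcd ((*) (u' $ k) ` (\<lambda>i. u $ i) ` UNIV)"
    by (rule Gcd_greatest) (auto simp: cross[symmetric])
  moreover have "u' $ k dvd Gcd ((*) (u $ k) ` (\<lambda>i. u' $ i) ` UNIV)"
    by (rule Gcd_greatest) (auto simp: cross)
  ultimately have "u $ k dvd u' $ k" "u' $ k dvd u $ k"
    using prim by (simp_all add: Gcd_mult)
  then have "\<bar>u $ k\<bar> = \<bar>u' $ k\<bar>" by (rule zdvd_antisym_abs)
  moreover have "u' $ k * u $ k > 0"
  proof -
    have "real_of_int (u' $ k * u $ k) = l * (real_of_int (u $ k))\<^sup>2"
      using comp[of k] by (simp add: power2_eq_square)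
    also have "\<dots> > 0" using \<open>l > 0\<close> k by simp
    finally have "0 < real_of_int (u' $ k * u $ k)" .
    then show ?thesis by (simp only: of_int_0_less_iff)
  qed
  ultimately have "u' $ k = u $ k" by (auto simp: abs_if zero_less_mult_iff split: if_splits)
  then have "l = 1" using comp[of k] k by simp
  then show ?thesis using parallel by (simp add: rvec_eq_iff)
qed

lemma bezout_Gcd_int:
  fixes f :: "'a \<Rightarrow> int"
  assumes "finite I"
  shows "\<exists>e. (\<Sum>i\<in>I. f i * e i) = Gcd (f ` I)"
  using assms
proof (induction I rule: finite_induct)
  case (insert i I)
  then obtain e where e: "(\<Sum>i\<in>I. f i * e i) = Gcd (f ` I)" by blast
  obtain x y where xy: "x * f i + y * Gcd (f ` I) = gcd (f i) (Gcd (f ` I))"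
    using bezout_int by blast
  define e' where "e' j = (if j = i then x else y * e j)" for j
  have "(\<Sum>j\<in>insert i I. f j * e' j) = x * f i + (\<Sum>j\<in>I. f j * (y * e j))"
    using insert.hyps by (simp add: e'_def mult.commute cong: sum.cong) (auto intro!: sum.cong)
  also have "(\<Sum>j\<in>I. f j * (y * e j)) = y * (\<Sum>j\<in>I. f j * e j)"
    by (simp add: sum_distrib_left mult.left_commute)
  finally show ?case using xy e by auto
qed simp

lemma bezout_vector:
  fixes u :: "int^'n"
  assumes "Gcd ((\<lambda>i. u $ i) ` UNIV) = 1"
  obtains e :: "int^'n" where "(\<Sum>i\<in>UNIV. u $ i * e $ i) = 1"
proof -
  obtain e where "(\<Sum>i\<in>UNIV. u $ i * e i) = 1"
    using bezout_Gcd_int[of UNIV "\<lambda>i. u $ i"] assms by auto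
  then show ?thesis using that[of "\<chi> i. e i"] by simp
qed

locale full_lattice_polytope =
  fixes P :: "(real^'n) set" and S :: "(real^'n) set"
  assumes finite_S: "finite S" and S_lattice: "S \<subseteq> lattice_pts"
    and P_eq: "P = convex hull S" and interior_P: "interior P \<noteq> {}"
begin

lemma polytope_P: "polytope P"
  using finite_S P_eq by (auto simp: polytope_def)

lemma polyhedron_P: "polyhedron P"
  by (rule polytope_imp_polyhedron[OF polytope_P])

lemma convex_P: "convex P"
  by (rule polytope_imp_convex[OF polytope_P])

lemma P_nonempty: "P \<noteq> {}"
  using interior_P interior_subset by blast

lemma finite_facets: "finite {F. F facet_of P}"
  by (rule finite_polytope_facets[OF polytope_P])

lemma facet_eq_convex_hull_lattice:
  assumes "F facet_of P"
  shows "F = convex hull (F \<inter> S)" "F \<inter> S \<noteq> {}"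
proof -
  obtain S' where S': "S' \<subseteq> S" "F = convex hull S'"
    using face_of_convex_hull_subset[OF finite_imp_compact[OF finite_S]] assms P_eq
    by (metis facet_of_imp_face_of)
  have "convex F" using assms face_of_imp_convex facet_of_imp_face_of by blast
  then have "convex hull (F \<inter> S) \<subseteq> F" by (simp add: hull_minimal)
  moreover have "S' \<subseteq> F \<inter> S"
    using S' hull_subset[of S'] by blast
  then have "F \<subseteq> convex hull (F \<inter> S)"
    using S'(2) hull_mono by blast
  ultimately show "F = convex hull (F \<inter> S)" by blast
  then show "F \<inter> S \<noteq> {}" using assms by (auto simp: facet_of_def)
qed

lemma facet_integral_normal:
  assumes F: "F facet_of P" and a: "a \<noteq> 0" "F = P \<inter> {x. a \<bullet> x = b}"
  obtains c s where "c \<noteq> 0" "\<And>i. c $ i \<in> \<int>" "c = s *\<^sub>R a"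
proof -
  define T where "T = F \<inter> S"
  obtain t0 where t0: "t0 \<in> T"
    using facet_eq_convex_hull_lattice[OF F] T_def by blast
  have T_lattice: "t \<in> T \<Longrightarrow> t $ i \<in> \<int>" for t i
    using S_lattice by (auto simp: T_def lattice_pts_def)
  have hull_T: "affine hull T = {x. a \<bullet> x = b}"
    using facet_affine_hull[OF interior_P F a] facet_eq_convex_hull_lattice(1)[OF F]
    unfolding T_def by (metis affine_hull_convex_hull)
  define D where "D = (+) (- t0) ` T"
  have "aff_dim T = aff_dim F"
    using facet_eq_convex_hull_lattice(1)[OF F] unfolding T_def by (metis aff_dim_convex_hull)
  also have "\<dots> = int CARD('n) - 1"
    using F aff_dim_nonempty_interior[OF interior_P] by (simp add: facet_of_def)
  finally have "aff_dim T = int CARD('n) - 1" .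
  moreover have "aff_dim T = int (dim D)"
    unfolding D_def by (rule aff_dim_eq_dim) (rule hull_inc[OF t0])
  ultimately have dim_D: "dim D = CARD('n) - 1" by simp
  obtain B where B: "B \<subseteq> D" "independent B" "D \<subseteq> span B" "card B = dim D"
    using basis_exists by blast
  have "w $ i \<in> \<int>" if "w \<in> B" for w i
    using that B(1) t0 T_lattice by (auto simp: D_def)
  then obtain c where c: "c \<noteq> 0" "\<And>i. c $ i \<in> \<int>" "\<And>w. w \<in> B \<Longrightarrow> c \<bullet> w = 0"
    using integral_orthogonal_vector[OF B(2)] B(4) dim_D by metis
  have "c \<bullet> y = 0" if "a \<bullet> y = 0" for y
  proof -
    have "a \<bullet> t0 = b" using hull_inc[OF t0] hull_T by auto
    then have "t0 + y \<in> affine hull T" using that hull_T by (simp add: inner_add_right)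
    then have "y \<in> span ((+) (- t0) ` (T - {t0}))"
      unfolding affine_hull_span2[OF t0] by auto
    also have "\<dots> \<subseteq> span B"
      using B(3) by (intro span_minimal) (auto simp: D_def)
    finally show ?thesis
      using orthogonal_to_span c(3) by (auto simp: orthogonal_def)
  qed
  then have "c = ((c \<bullet> a) / (a \<bullet> a)) *\<^sub>R a"
    using orthogonal_complement_parallel a(1) by blast
  then show ?thesis using that c by blast
qed

lemma prim_inner_normal_exists:
  assumes F: "F facet_of P"
  shows "\<exists>u. is_prim_inner_normal P F u"
proof -
  obtain a b where ab: "a \<noteq> 0" "P \<subseteq> {x. a \<bullet> x \<le> b}" "F = P \<inter> {x. a \<bullet> x = b}"
    using facet_of_polyhedron[OF polyhedron_P F] by blast
  obtain c s where c: "c \<noteq> 0" "\<And>i. c $ i \<in> \<int>" "c = s *\<^sub>R a"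
    using facet_integral_normal[OF F ab(1,3)] by blast
  have "c \<in> lattice_pts" using c(2) by (simp add: lattice_pts_def)
  then obtain v0 where v0: "rvec v0 = c"
    by (auto simp: lattice_pts_eq_range_rvec)
  define v where "v = (if s < 0 then v0 else - v0)"
  have v: "rvec v = (- \<bar>s\<bar>) *\<^sub>R a" "v \<noteq> 0"
    using v0 c by (auto simp: v_def)
  obtain g u where gu: "g > 0" "Gcd ((\<lambda>i. u $ i) ` UNIV) = 1" "v = g *s u"
    using primitive_vector_exists[OF v(2)] by blast
  define l where "l = - \<bar>s\<bar> / g"
  have "s \<noteq> 0" using c by auto
  then have "l < 0" using gu(1) by (simp add: l_def)
  have "rvec v = real_of_int g *\<^sub>R rvec u" using gu(3) by (simp add: rvec_scaleR)
  then have "rvec u = (1 / g) *\<^sub>R rvec v" using gu(1) by simp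
  then have u: "rvec u = l *\<^sub>R a" using v(1) by (simp add: l_def)
  have "is_prim_inner_normal P F u"
    unfolding is_prim_inner_normal_def
  proof (intro conjI exI[of _ "l * b"])
    show "Gcd ((\<lambda>i. u $ i) ` UNIV) = 1" by (rule gu(2))
    show "\<forall>x\<in>P. l * b \<le> lfun u x"
      using ab(2) \<open>l < 0\<close> by (auto simp: lfun_eq_inner u mult_left_mono_neg)
    show "F = {x \<in> P. lfun u x = l * b}"
      using ab(3) \<open>l < 0\<close> by (auto simp: lfun_eq_inner u)
  qed
  then show ?thesis by blast
qed

lemma prim_inner_normal_halfspace:
  assumes "is_prim_inner_normal P F u"
  obtains c where "- rvec u \<noteq> 0" "P \<subseteq> {x. (- rvec u) \<bullet> x \<le> - c}"
    "F = P \<inter> {x. (- rvec u) \<bullet> x = - c}"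
proof -
  obtain c where c: "\<forall>x\<in>P. c \<le> lfun u x" "F = {x\<in>P. lfun u x = c}"
    and gcd: "Gcd ((\<lambda>i. u $ i) ` UNIV) = 1"
    using assms unfolding is_prim_inner_normal_def by blast
  have "u \<noteq> 0" using gcd by (auto simp: image_def)
  then have "- rvec u \<noteq> 0" by simp
  moreover have "P \<subseteq> {x. (- rvec u) \<bullet> x \<le> - c}"
    using c(1) by (auto simp: lfun_eq_inner)
  moreover have "F = P \<inter> {x. (- rvec u) \<bullet> x = - c}"
    unfolding c(2) by (auto simp: lfun_eq_inner)
  ultimately show ?thesis using that by blast
qed

lemma prim_inner_normal_unique:
  assumes F: "F facet_of P"
    and u: "is_prim_inner_normal P F u" and u': "is_prim_inner_normal P F u'"
  shows "u' = u"
proof -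
  obtain c where c: "- rvec u \<noteq> 0" "P \<subseteq> {x. (- rvec u) \<bullet> x \<le> - c}"
    "F = P \<inter> {x. (- rvec u) \<bullet> x = - c}"
    by (rule prim_inner_normal_halfspace[OF u])
  obtain c' where c': "- rvec u' \<noteq> 0" "P \<subseteq> {x. (- rvec u') \<bullet> x \<le> - c'}"
    "F = P \<inter> {x. (- rvec u') \<bullet> x = - c'}"
    by (rule prim_inner_normal_halfspace[OF u'])
  obtain l where "l > 0" "- rvec u' = l *\<^sub>R (- rvec u)"
    using facet_normal_unique[OF interior_P F c c'] by blast
  then show ?thesis
    using u u' by (intro primitive_vector_unique[of u u' l]) (auto simp: is_prim_inner_normal_def)
qed

lemma nF_is_prim_inner_normal:
  assumes "F facet_of P"
  shows "is_prim_inner_normal P F (nF P F)"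
  unfolding nF_def
  by (rule theI') (use prim_inner_normal_exists prim_inner_normal_unique assms in blast)

lemma
  assumes F: "F facet_of P"
  shows lfun_nF_ge: "x \<in> P \<Longrightarrow> - hF P F \<le> lfun (nF P F) x"
    and mem_facet_iff: "x \<in> F \<longleftrightarrow> x \<in> P \<and> lfun (nF P F) x = - hF P F"
    and nF_halfspace: "- rvec (nF P F) \<noteq> 0" "P \<subseteq> {x. (- rvec (nF P F)) \<bullet> x \<le> hF P F}"
      "F = P \<inter> {x. (- rvec (nF P F)) \<bullet> x = hF P F}"
    and hF_Ints: "hF P F \<in> \<int>"
proof -
  obtain c where c: "- rvec (nF P F) \<noteq> 0" "P \<subseteq> {x. (- rvec (nF P F)) \<bullet> x \<le> - c}"
    "F = P \<inter> {x. (- rvec (nF P F)) \<bullet> x = - c}"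
    by (rule prim_inner_normal_halfspace[OF nF_is_prim_inner_normal[OF F]])
  have ge: "c \<le> lfun (nF P F) x" if "x \<in> P" for x
    using c(2) that by (auto simp: lfun_eq_inner)
  have mem: "x \<in> F \<longleftrightarrow> x \<in> P \<and> lfun (nF P F) x = c" for x
    using arg_cong[OF c(3), of "\<lambda>A. x \<in> A"] by (auto simp: lfun_eq_inner)
  obtain t where t: "t \<in> F \<inter> S"
    using facet_eq_convex_hull_lattice(2)[OF F] by blast
  then have "t \<in> P" "lfun (nF P F) t = c" using mem by blast+
  then have "(INF x\<in>P. lfun (nF P F) x) = c"
    using ge by (intro cInf_eq_minimum) auto
  then have hF: "hF P F = - c" by (simp add: hF_def)
  show "x \<in> P \<Longrightarrow> - hF P F \<le> lfun (nF P F) x"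
    "x \<in> F \<longleftrightarrow> x \<in> P \<and> lfun (nF P F) x = - hF P F"
    using ge mem hF by auto
  show "- rvec (nF P F) \<noteq> 0" "P \<subseteq> {x. (- rvec (nF P F)) \<bullet> x \<le> hF P F}"
    "F = P \<inter> {x. (- rvec (nF P F)) \<bullet> x = hF P F}"
    using c(1-3) hF by simp_all
  have "t \<in> lattice_pts" using t S_lattice by auto
  then show "hF P F \<in> \<int>"
    using lfun_lattice_pts_Ints \<open>lfun (nF P F) t = c\<close> hF by (metis Ints_minus)
qed

lemma P_eq_facet_halfspaces: "P = {x. \<forall>F. F facet_of P \<longrightarrow> - hF P F \<le> lfun (nF P F) x}"
proof
  show "P \<subseteq> {x. \<forall>F. F facet_of P \<longrightarrow> - hF P F \<le> lfun (nF P F) x}"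
    using lfun_nF_ge by blast
  show "{x. \<forall>F. F facet_of P \<longrightarrow> - hF P F \<le> lfun (nF P F) x} \<subseteq> P"
  proof (rule subsetI, rule ccontr)
    fix x assume x: "x \<in> {x. \<forall>F. F facet_of P \<longrightarrow> - hF P F \<le> lfun (nF P F) x}" "x \<notin> P"
    obtain C a b where C: "C facet_of P" "a \<noteq> 0" "P \<subseteq> {y. a \<bullet> y \<le> b}"
      "C = P \<inter> {y. a \<bullet> y = b}" "a \<bullet> x > b"
      using polyhedron_facet_separation[OF polyhedron_P interior_P x(2)] by blast
    obtain l where l: "l > 0" "- rvec (nF P C) = l *\<^sub>R a" "hF P C = l * b"
      using facet_normal_unique[OF interior_P C(1-4) nF_halfspace[OF C(1)]] by blast
    then have "rvec (nF P C) = - (l *\<^sub>R a)" by (metis minus_minus)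
    then have "lfun (nF P C) x < - hF P C"
      using C(5) l(1,3) by (simp add: lfun_eq_inner)
    moreover have "- hF P C \<le> lfun (nF P C) x" using x(1) C(1) by blast
    ultimately show False by linarith
  qed
qed

lemma scaled_P_iff:
  assumes "k > 0"
  shows "x \<in> (\<lambda>v. k *\<^sub>R v) ` P \<longleftrightarrow> (\<forall>F. F facet_of P \<longrightarrow> - k * hF P F \<le> lfun (nF P F) x)"
proof -
  have "x \<in> (\<lambda>v. k *\<^sub>R v) ` P \<longleftrightarrow> (1 / k) *\<^sub>R x \<in> P"
    using assms by (auto simp: image_iff intro: bexI[of _ "(1 / k) *\<^sub>R x"])
  also have "\<dots> \<longleftrightarrow> (\<forall>F. F facet_of P \<longrightarrow> - k * hF P F \<le> lfun (nF P F) x)"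
    using assms by (subst P_eq_facet_halfspaces) (simp add: lfun_scaleR field_simps)
  finally show ?thesis .
qed

lemma lfun_nF_scaled_ge:
  assumes "k \<ge> 0" "x \<in> (\<lambda>v. k *\<^sub>R v) ` P" "F facet_of P"
  shows "- k * hF P F \<le> lfun (nF P F) x"
proof -
  obtain p where "p \<in> P" "x = k *\<^sub>R p" using assms(2) by blast
  then show ?thesis
    using mult_left_mono[OF lfun_nF_ge[OF assms(3)] assms(1)] by (simp add: lfun_scaleR)
qed

lemma interior_scaled_P_iff:
  assumes "k > 0"
  shows "x \<in> interior ((\<lambda>v. k *\<^sub>R v) ` P) \<longleftrightarrow>
    (\<forall>F. F facet_of P \<longrightarrow> - k * hF P F < lfun (nF P F) x)"
proof
  assume x: "x \<in> interior ((\<lambda>v. k *\<^sub>R v) ` P)"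
  show "\<forall>F. F facet_of P \<longrightarrow> - k * hF P F < lfun (nF P F) x"
  proof (intro allI impI)
    fix F assume F: "F facet_of P"
    have "(\<lambda>v. k *\<^sub>R v) ` P \<subseteq> {y. rvec (nF P F) \<bullet> y \<ge> - k * hF P F}"
    proof
      fix y assume "y \<in> (\<lambda>v. k *\<^sub>R v) ` P"
      then show "y \<in> {y. rvec (nF P F) \<bullet> y \<ge> - k * hF P F}"
        using lfun_nF_scaled_ge[of k y F] assms F by (simp add: lfun_eq_inner)
    qed
    then have "x \<in> interior {y. rvec (nF P F) \<bullet> y \<ge> - k * hF P F}"
      using x interior_mono by blast
    then show "- k * hF P F < lfun (nF P F) x"
      using nF_halfspace(1)[OF F] by (simp add: lfun_eq_inner)
  qed
next
  assume x: "\<forall>F. F facet_of P \<longrightarrow> - k * hF P F < lfun (nF P F) x"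
  define U where "U = (\<Inter>F\<in>{F. F facet_of P}. {y. rvec (nF P F) \<bullet> y > - k * hF P F})"
  have "open U"
    unfolding U_def using finite_facets by (intro open_INT) (auto simp: open_halfspace_gt)
  moreover have "x \<in> U" using x by (auto simp: U_def lfun_eq_inner)
  moreover have "U \<subseteq> (\<lambda>v. k *\<^sub>R v) ` P"
    using assms by (auto simp: U_def scaled_P_iff lfun_eq_inner less_imp_le)
  ultimately show "x \<in> interior ((\<lambda>v. k *\<^sub>R v) ` P)"
    by (meson interior_maximal interiorI)
qed

lemma lfun_nF_interior_lattice_ge:
  assumes "x \<in> interior ((\<lambda>v. real k *\<^sub>R v) ` P)" "x \<in> lattice_pts" "k \<ge> 1" "F facet_of P"
  shows "1 - real k * hF P F \<le> lfun (nF P F) x"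
proof -
  have "- real k * hF P F < lfun (nF P F) x"
    using assms(1,3,4) interior_scaled_P_iff[of "real k"] by auto
  moreover have "- real k * hF P F \<in> \<int>" using hF_Ints[OF assms(4)] by simp
  ultimately show ?thesis
    using Ints_less_imp_add_one_le[OF _ lfun_lattice_pts_Ints[OF assms(2)]] by fastforce
qed

lemma facet_lattice_sum:
  assumes F: "F facet_of P"
  obtains N :: nat and q where "N \<ge> 1" "q \<in> lattice_pts" "lfun (nF P F) q = - N * hF P F"
    "\<And>G. G facet_of P \<Longrightarrow> G \<noteq> F \<Longrightarrow> 1 - N * hF P G \<le> lfun (nF P G) q"
proof -
  define T where "T = F \<inter> S"
  have "finite T" "T \<noteq> {}" "T \<subseteq> P" "T \<subseteq> lattice_pts"
    using finite_S facet_eq_convex_hull_lattice(2)[OF F] facet_of_imp_subset[OF F] S_lattice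
    by (auto simp: T_def)
  define N where "N = card T"
  define q where "q = (\<Sum>t\<in>T. t)"
  have "N \<ge> 1" using \<open>finite T\<close> \<open>T \<noteq> {}\<close> by (simp add: N_def Suc_le_eq card_gt_0_iff)
  have "q \<in> lattice_pts"
    using \<open>T \<subseteq> lattice_pts\<close> by (auto simp: q_def lattice_pts_def intro!: Ints_sum)
  have lfun_q: "lfun u q = (\<Sum>t\<in>T. lfun u t)" for u
    by (simp add: q_def lfun_sum)
  have "lfun (nF P F) q = - N * hF P F"
    unfolding lfun_q N_def using mem_facet_iff[OF F] by (simp add: T_def)
  moreover have "1 - N * hF P G \<le> lfun (nF P G) q" if G: "G facet_of P" "G \<noteq> F" for G
  proof -
    have ge: "- hF P G \<le> lfun (nF P G) t" if "t \<in> T" for t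
      using lfun_nF_ge[OF G(1)] that \<open>T \<subseteq> P\<close> by blast
    have "\<not> T \<subseteq> G"
    proof
      assume "T \<subseteq> G"
      then have "F \<subseteq> G"
        using facet_eq_convex_hull_lattice(1)[OF F] G(1) face_of_imp_convex facet_of_imp_face_of
        by (metis T_def hull_minimal)
      then show False using facet_of_subset_eq[OF F G(1)] G(2) by blast
    qed
    then obtain t where t: "t \<in> T" "lfun (nF P G) t \<noteq> - hF P G"
      using mem_facet_iff[OF G(1)] \<open>T \<subseteq> P\<close> by blast
    then have "- hF P G < lfun (nF P G) t" using ge[OF t(1)] by linarith
    then have "(\<Sum>t\<in>T. - hF P G) < (\<Sum>t\<in>T. lfun (nF P G) t)"
      using ge t(1) \<open>finite T\<close> by (intro sum_strict_mono_ex1) auto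
    then have "- N * hF P G < lfun (nF P G) q" by (simp add: lfun_q N_def)
    moreover have "lfun (nF P G) q \<in> \<int>" by (rule lfun_lattice_pts_Ints) fact
    moreover have "- N * hF P G \<in> \<int>" using hF_Ints[OF G(1)] by simp
    ultimately show ?thesis using Ints_less_imp_add_one_le by fastforce
  qed
  ultimately show ?thesis using that \<open>N \<ge> 1\<close> \<open>q \<in> lattice_pts\<close> by blast
qed

text \<open>Adding a large multiple of the lattice point \<open>q\<close>, which lies in the relative interior of
  a dilate of \<open>F\<close>, to a lattice point \<open>e\<close> with \<open>n\<^sub>F(e) = 1\<close> pushes \<open>e\<close> into the interior of a
  dilate of \<open>P\<close> while keeping it at lattice distance one from the corresponding dilate of \<open>F\<close>.\<close>

lemma interior_lattice_point_near_facet: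
  assumes F: "F facet_of P"
  obtains j :: nat and w where "j \<ge> 1" "rvec w \<in> interior ((\<lambda>v. real j *\<^sub>R v) ` P)"
    "lfun (nF P F) (rvec w) = 1 - real j * hF P F"
proof -
  obtain N :: nat and q where q: "N \<ge> 1" "q \<in> lattice_pts" "lfun (nF P F) q = - N * hF P F"
    "\<And>G. G facet_of P \<Longrightarrow> G \<noteq> F \<Longrightarrow> 1 - N * hF P G \<le> lfun (nF P G) q"
    using facet_lattice_sum[OF F] by blast
  have "Gcd ((\<lambda>i. nF P F $ i) ` UNIV) = 1"
    using nF_is_prim_inner_normal[OF F] by (simp add: is_prim_inner_normal_def)
  then obtain e where e: "(\<Sum>i\<in>UNIV. nF P F $ i * e $ i) = 1"
    by (rule bezout_vector)
  define M where "M = (\<Sum>G\<in>{G. G facet_of P}. \<bar>lfun (nF P G) (rvec e)\<bar>)"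
  have M: "\<bar>lfun (nF P G) (rvec e)\<bar> \<le> M" if "G facet_of P" for G
    unfolding M_def using finite_facets that by (intro member_le_sum) auto
  obtain m :: nat where m: "real m > M" using reals_Archimedean2 by blast
  have "M \<ge> 0" unfolding M_def by (simp add: sum_nonneg)
  then have "m \<ge> 1" using m by (cases m) auto
  obtain qi where qi: "q = rvec qi" using q(2) by (auto simp: lattice_pts_eq_range_rvec)
  define w where "w = of_nat m *s qi + e"
  have lfun_w: "lfun u (rvec w) = m * lfun u q + lfun u (rvec e)" for u
    by (simp add: w_def rvec_scaleR qi lfun_add lfun_scaleR)
  have "lfun (nF P F) (rvec e) = 1" using e by (simp add: lfun_rvec)
  then have w_F: "lfun (nF P F) (rvec w) = 1 - real (m * N) * hF P F"
    using q(3) by (simp add: lfun_w)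
  have "- real (m * N) * hF P G < lfun (nF P G) (rvec w)" if G: "G facet_of P" for G
  proof (cases "G = F")
    case False
    have "m * (1 - N * hF P G) \<le> m * lfun (nF P G) q"
      using q(4)[OF G False] by (simp add: mult_left_mono)
    moreover have "- real m < lfun (nF P G) (rvec e)" using M[OF G] m by linarith
    ultimately show ?thesis by (simp add: lfun_w algebra_simps)
  qed (simp add: w_F)
  then have "rvec w \<in> interior ((\<lambda>v. real (m * N) *\<^sub>R v) ` P)"
    using \<open>m \<ge> 1\<close> q(1) by (subst interior_scaled_P_iff) auto
  moreover have "m * N \<ge> 1" using \<open>m \<ge> 1\<close> q(1) by simp
  ultimately show ?thesis using that w_F by blast
qed

lemma
  shows codegree_ge_1: "codegree P \<ge> 1"
    and codegree_interior_lattice_point: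
      "\<exists>z. rvec z \<in> interior ((\<lambda>v. real (codegree P) *\<^sub>R v) ` P)"
proof -
  have "0 < aff_dim P" using aff_dim_nonempty_interior[OF interior_P] by simp
  then obtain F where "F facet_of P" using polytope_facet_exists[OF polytope_P] by blast
  then obtain j :: nat and w where "j \<ge> 1" "rvec w \<in> interior ((\<lambda>v. real j *\<^sub>R v) ` P)"
    by (rule interior_lattice_point_near_facet)
  then have "\<exists>k::nat. 1 \<le> k \<and> interior ((\<lambda>v. real k *\<^sub>R v) ` P) \<inter> lattice_pts \<noteq> {}"
    using rvec_in_lattice_pts by blast
  then have "1 \<le> codegree P \<and> interior ((\<lambda>v. real (codegree P) *\<^sub>R v) ` P) \<inter> lattice_pts \<noteq> {}"
    unfolding codegree_def by (rule LeastI_ex)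
  then show "codegree P \<ge> 1" "\<exists>z. rvec z \<in> interior ((\<lambda>v. real (codegree P) *\<^sub>R v) ` P)"
    unfolding lattice_pts_eq_range_rvec by blast+
qed

lemma codegree_le:
  assumes "k \<ge> 1" "rvec z \<in> interior ((\<lambda>v. real k *\<^sub>R v) ` P)"
  shows "codegree P \<le> k"
  unfolding codegree_def by (rule Least_le) (use assms rvec_in_lattice_pts in blast)

end

section \<open>Floor and remainder polytopes\<close>

definition floor_remainder_sums :: "(real^'n) set \<Rightarrow> (real^'n) set" where
  "floor_remainder_sums P =
     {x + y | x y. x \<in> floor_poly ((\<lambda>v. real (codegree P) *\<^sub>R v) ` P) \<inter> lattice_pts
                 \<and> y \<in> remainder_poly P \<inter> lattice_pts}"

lemma convex_lfun_inequalities: "convex {x. \<forall>F. Q F \<longrightarrow> c F \<le> lfun (n F) x}"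
proof -
  have "{x. \<forall>F. Q F \<longrightarrow> c F \<le> lfun (n F) x} = (\<Inter>F\<in>{F. Q F}. {x. rvec (n F) \<bullet> x \<ge> c F})"
    by (auto simp: lfun_eq_inner)
  then show ?thesis by (simp add: convex_INT convex_halfspace_ge)
qed

lemma remainder_poly_subset:
  "remainder_poly P \<subseteq>
     {x. \<forall>F. F facet_of P \<longrightarrow> lfun (nF P F) x \<ge> (real (codegree P) - 1) * hF P F - 1}"
  unfolding remainder_poly_def by (rule hull_minimal) (auto intro: convex_lfun_inequalities)

lemma remainder_poly_lattice_pts_iff:
  "y \<in> remainder_poly P \<inter> lattice_pts \<longleftrightarrow>
     y \<in> lattice_pts \<and> (\<forall>F. F facet_of P \<longrightarrow> (real (codegree P) - 1) * hF P F - 1 \<le> lfun (nF P F) y)"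
  using remainder_poly_subset[of P] by (auto simp: remainder_poly_def intro: hull_inc)

lemma floor_poly_lattice_pts:
  assumes "convex Q"
  shows "floor_poly Q \<inter> lattice_pts = interior Q \<inter> lattice_pts"
proof -
  have "floor_poly Q \<subseteq> interior Q"
    unfolding floor_poly_def using assms by (intro hull_minimal convex_interior) auto
  then show ?thesis
    unfolding floor_poly_def using hull_subset by fastforce
qed

context full_lattice_polytope
begin

lemma floor_poly_subset:
  "floor_poly ((\<lambda>v. real (codegree P) *\<^sub>R v) ` P) \<subseteq>
     {x. \<forall>F. F facet_of P \<longrightarrow> lfun (nF P F) x \<ge> 1 - real (codegree P) * hF P F}"
  unfolding floor_poly_def
proof (rule hull_minimal)
  show "interior ((\<lambda>v. real (codegree P) *\<^sub>R v) ` P) \<inter> lattice_pts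
      \<subseteq> {x. \<forall>F. F facet_of P \<longrightarrow> lfun (nF P F) x \<ge> 1 - real (codegree P) * hF P F}"
    using lfun_nF_interior_lattice_ge codegree_ge_1 by blast
qed (rule convex_lfun_inequalities)

lemma floor_poly_codegree_lattice_pts:
  "floor_poly ((\<lambda>v. real (codegree P) *\<^sub>R v) ` P) \<inter> lattice_pts =
     interior ((\<lambda>v. real (codegree P) *\<^sub>R v) ` P) \<inter> lattice_pts"
  using convex_P by (simp add: floor_poly_lattice_pts convex_scaling)

lemma floor_remainder_sums_iff:
  "z \<in> floor_remainder_sums P \<longleftrightarrow>
     (\<exists>x y. z = x + y \<and> x \<in> interior ((\<lambda>v. real (codegree P) *\<^sub>R v) ` P) \<inter> lattice_pts \<and>
            y \<in> lattice_pts \<and>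
            (\<forall>F. F facet_of P \<longrightarrow> (real (codegree P) - 1) * hF P F - 1 \<le> lfun (nF P F) y))"
  unfolding floor_remainder_sums_def floor_poly_codegree_lattice_pts remainder_poly_lattice_pts_iff
  by blast

lemma floor_remainder_sums_subset: "floor_remainder_sums P \<subseteq> P \<inter> lattice_pts"
proof
  fix z assume "z \<in> floor_remainder_sums P"
  then obtain x y where z: "z = x + y"
    and x: "x \<in> interior ((\<lambda>v. real (codegree P) *\<^sub>R v) ` P)" "x \<in> lattice_pts"
    and y: "y \<in> lattice_pts"
      "\<And>F. F facet_of P \<Longrightarrow> (real (codegree P) - 1) * hF P F - 1 \<le> lfun (nF P F) y"
    unfolding floor_remainder_sums_iff by blast
  have "- hF P F \<le> lfun (nF P F) z" if F: "F facet_of P" for F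
    using lfun_nF_interior_lattice_ge[OF x codegree_ge_1 F] y(2)[OF F]
    by (simp add: z lfun_add algebra_simps)
  then have "z \<in> P" by (subst P_eq_facet_halfspaces) blast
  moreover have "z \<in> lattice_pts"
    using x(2) y(1) by (auto simp: z lattice_pts_eq_range_rvec simp flip: rvec_add)
  ultimately show "z \<in> P \<inter> lattice_pts" by blast
qed

end

section \<open>The trace of the canonical module\<close>

lemma lookup_single_mult:
  fixes f :: "'a::cancel_comm_monoid_add \<Rightarrow>\<^sub>0 'b::semiring_0"
  shows "Poly_Mapping.lookup (Poly_Mapping.single k c * f) (k + j) = c * Poly_Mapping.lookup f j"
proof -
  have "Poly_Mapping.lookup (Poly_Mapping.single k c * f) (k + j) =
      (\<Sum>l. Poly_Mapping.lookup (Poly_Mapping.single k c) l *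
        (\<Sum>q. Poly_Mapping.lookup f q when k + j = l + q))"
    by (rule lookup_mult)
  also have "\<dots> = c * (\<Sum>q. Poly_Mapping.lookup f q when q = j)"
    by (simp add: lookup_single when_mult Sum_any_when_equal)
  finally show ?thesis by simp
qed

lemma keys_single_mult_subset:
  fixes f :: "'a::cancel_comm_monoid_add \<Rightarrow>\<^sub>0 'b::semiring_0"
  shows "Poly_Mapping.keys (Poly_Mapping.single k c * f) \<subseteq> (+) k ` Poly_Mapping.keys f"
  using keys_mult[of "Poly_Mapping.single k c" f] by (auto split: if_splits)

lemma add_mem_keys_single_mult:
  fixes f :: "'a::cancel_comm_monoid_add \<Rightarrow>\<^sub>0 'b::semiring_no_zero_divisors"
  assumes "c \<noteq> 0" "j \<in> Poly_Mapping.keys f"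
  shows "k + j \<in> Poly_Mapping.keys (Poly_Mapping.single k c * f)"
  using assms by (simp add: in_keys_iff lookup_single_mult)

lemma map_key_add_single_mult:
  fixes g :: "'a::cancel_comm_monoid_add \<Rightarrow>\<^sub>0 'b::semiring_1"
  shows "Poly_Mapping.map_key ((+) c) (Poly_Mapping.single c 1 * g) = g"
proof -
  have "inj ((+) c)" by (simp add: inj_def)
  then show ?thesis
    by (intro poly_mapping_eqI) (simp add: Poly_Mapping.map_key.rep_eq lookup_single_mult)
qed

lemma single_mult_map_key_add:
  fixes w :: "'a::cancel_comm_monoid_add \<Rightarrow>\<^sub>0 'b::semiring_1"
  assumes "Poly_Mapping.keys w \<subseteq> range ((+) c)"
  shows "Poly_Mapping.single c 1 * Poly_Mapping.map_key ((+) c) w = w"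
proof (rule poly_mapping_eqI)
  have inj: "inj ((+) c)" by (simp add: inj_def)
  fix j
  show "Poly_Mapping.lookup (Poly_Mapping.single c 1 * Poly_Mapping.map_key ((+) c) w) j =
      Poly_Mapping.lookup w j"
  proof (cases "j \<in> range ((+) c)")
    case True
    then show ?thesis
      using inj by (auto simp: lookup_single_mult Poly_Mapping.map_key.rep_eq)
  next
    case False
    then have "j \<notin> Poly_Mapping.keys (Poly_Mapping.single c 1 * Poly_Mapping.map_key ((+) c) w)"
      "j \<notin> Poly_Mapping.keys w"
      using keys_single_mult_subset assms by blast+
    then show ?thesis by (simp add: in_keys_iff)
  qed
qed

lemma map_key_add_mult:
  fixes w :: "'a::cancel_comm_monoid_add \<Rightarrow>\<^sub>0 'b::comm_semiring_1"
  assumes "Poly_Mapping.keys w \<subseteq> range ((+) c)"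
  shows "Poly_Mapping.map_key ((+) c) (r * w) = r * Poly_Mapping.map_key ((+) c) w"
proof -
  have "r * w = Poly_Mapping.single c 1 * (r * Poly_Mapping.map_key ((+) c) w)"
    by (subst single_mult_map_key_add[OF assms, symmetric]) (simp add: ac_simps)
  then show ?thesis by (simp add: map_key_add_single_mult)
qed

lemma poly_mapping_sum_single:
  fixes f :: "'a \<Rightarrow>\<^sub>0 'b::comm_monoid_add"
  shows "(\<Sum>k\<in>Poly_Mapping.keys f. Poly_Mapping.single k (Poly_Mapping.lookup f k)) = f"
    (is "?s = f")
proof (rule poly_mapping_eqI)
  fix j
  show "Poly_Mapping.lookup ?s j = Poly_Mapping.lookup f j"
    by (cases "j \<in> Poly_Mapping.keys f")
      (simp_all add: lookup_sum lookup_single when_def in_keys_iff)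
qed

lemma keys_sum_list:
  "Poly_Mapping.keys (sum_list (map g l)) \<subseteq> (\<Union>p\<in>set l. Poly_Mapping.keys (g p))"
proof (induction l)
  case (Cons p l)
  then show ?case using keys_add[of "g p" "sum_list (map g l)"] by auto
qed simp

lemma canonical_module_subset_ehrhart_ring: "canonical_module K P \<subseteq> ehrhart_ring K P"
  using interior_subset
  by (fastforce simp: canonical_module_def ehrhart_ring_def int_cone_pts_def cone_pts_def)

lemma keys_hom_omega_subset:
  assumes "\<phi> \<in> hom_omega K P" "w \<in> canonical_module K P"
  shows "Poly_Mapping.keys (\<phi> w) \<subseteq> cone_pts P"
  using assms by (auto simp: hom_omega_def ehrhart_ring_def)

lemma hom_omega_commute:
  assumes "\<phi> \<in> hom_omega K P" "v \<in> canonical_module K P" "w \<in> canonical_module K P"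
  shows "v * \<phi> w = w * \<phi> v"
proof -
  have "v \<in> ehrhart_ring K P" "w \<in> ehrhart_ring K P"
    using assms(2,3) canonical_module_subset_ehrhart_ring by blast+
  then have "\<phi> (v * w) = v * \<phi> w" "\<phi> (w * v) = w * \<phi> v"
    using assms by (simp_all add: hom_omega_def)
  then show ?thesis by (metis mult.commute)
qed

lemma keys_hom_omega_shift:
  fixes K :: "'k::field itself"
  assumes "\<phi> \<in> hom_omega K P" "e \<in> int_cone_pts P" "w \<in> canonical_module K P"
    and "d \<in> Poly_Mapping.keys (\<phi> w)"
  obtains v t where "v \<in> Poly_Mapping.keys w" "t \<in> Poly_Mapping.keys (\<phi> (Poly_Mapping.single e 1))"
    "e + d = v + t"
proof -
  have e: "Poly_Mapping.single e (1::'k) \<in> canonical_module K P"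
    using assms(2) by (simp add: canonical_module_def)
  have "e + d \<in> Poly_Mapping.keys (Poly_Mapping.single e (1::'k) * \<phi> w)"
    using assms(4) by (simp add: add_mem_keys_single_mult)
  also have "\<dots> = Poly_Mapping.keys (w * \<phi> (Poly_Mapping.single e 1))"
    using hom_omega_commute[OF assms(1) e assms(3)] by simp
  finally show ?thesis using keys_mult that by blast
qed

lemma keys_trace_omega:
  assumes "f \<in> trace_omega K P" "d \<in> Poly_Mapping.keys f"
  obtains \<phi> w where "\<phi> \<in> hom_omega K P" "w \<in> canonical_module K P" "d \<in> Poly_Mapping.keys (\<phi> w)"
proof -
  obtain l where l: "set l \<subseteq> hom_omega K P \<times> canonical_module K P"
    "f = sum_list (map (\<lambda>(\<phi>, w). \<phi> w) l)"
    using assms(1) by (auto simp: trace_omega_def)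
  then show ?thesis
    using assms(2) keys_sum_list[of "\<lambda>(\<phi>, w). \<phi> w" l] that by fastforce
qed

lemma trace_omega_add:
  assumes "f \<in> trace_omega K P" "g \<in> trace_omega K P"
  shows "f + g \<in> trace_omega K P"
proof -
  obtain l1 l2 where "set l1 \<subseteq> hom_omega K P \<times> canonical_module K P"
    "f = sum_list (map (\<lambda>(\<phi>, w). \<phi> w) l1)"
    "set l2 \<subseteq> hom_omega K P \<times> canonical_module K P"
    "g = sum_list (map (\<lambda>(\<phi>, w). \<phi> w) l2)"
    using assms by (auto simp: trace_omega_def)
  then show ?thesis
    unfolding trace_omega_def by (intro CollectI exI[of _ "l1 @ l2"]) auto
qed

lemma trace_omega_sum:
  assumes "\<And>a. a \<in> A \<Longrightarrow> g a \<in> trace_omega K P"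
  shows "sum g A \<in> trace_omega K P"
  using assms
proof (induction A rule: infinite_finite_induct)
  case (insert a A)
  then show ?case by (simp add: trace_omega_add)
qed (auto simp: trace_omega_def intro!: exI[of _ "[]"])

section \<open>Nearly Gorenstein lattice polytopes\<close>

context full_lattice_polytope
begin

lemma cone_pts_zero_level: "(x, 0) \<in> cone_pts P \<longleftrightarrow> x = 0"
  using P_nonempty by (auto simp: cone_pts_def)

lemma hom_omega_key_bound:
  fixes K :: "'k::field itself"
  assumes \<phi>: "\<phi> \<in> hom_omega K P" and e: "(ex, ek) \<in> int_cone_pts P"
    and t: "(tx, tk) \<in> Poly_Mapping.keys (\<phi> (Poly_Mapping.single (ex, ek) 1))"
    and F: "F facet_of P"
  shows "(real ek - real tk) * hF P F - 1 \<le> lfun (nF P F) (rvec tx - rvec ex)"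
proof -
  obtain j :: nat and w where w: "j \<ge> 1" "rvec w \<in> interior ((\<lambda>v. real j *\<^sub>R v) ` P)"
    "lfun (nF P F) (rvec w) = 1 - real j * hF P F"
    by (rule interior_lattice_point_near_facet[OF F])
  have w_cone: "(w, j) \<in> int_cone_pts P" using w by (simp add: int_cone_pts_def)
  have e_omega: "Poly_Mapping.single (ex, ek) (1::'k) \<in> canonical_module K P"
    using e by (simp add: canonical_module_def)
  obtain v s where v: "v \<in> Poly_Mapping.keys (Poly_Mapping.single (ex, ek) (1::'k))"
    and s: "s \<in> Poly_Mapping.keys (\<phi> (Poly_Mapping.single (w, j) 1))"
    and sum_eq: "(w, j) + (tx, tk) = v + s"
    by (rule keys_hom_omega_shift[OF \<phi> w_cone e_omega t])
  obtain sx sk where s_eq: "s = (sx, sk)" by (cases s)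
  have "Poly_Mapping.single (w, j) (1::'k) \<in> canonical_module K P"
    using w_cone by (simp add: canonical_module_def)
  then have "(sx, sk) \<in> cone_pts P"
    using keys_hom_omega_subset[OF \<phi>] s s_eq by blast
  then have "- real sk * hF P F \<le> lfun (nF P F) (rvec sx)"
    using lfun_nF_scaled_ge F by (simp add: cone_pts_def)
  moreover have "sx = w + (tx - ex)" "sk + ek = j + tk"
    using v sum_eq by (simp_all add: s_eq algebra_simps)
  moreover from this(2) have "real sk = real j + real tk - real ek"
    by (metis add_diff_cancel_right' of_nat_add)
  ultimately show ?thesis
    using w(3) by (simp add: lfun_add lfun_diff algebra_simps)
qed

lemma floor_remainder_sums_memI:
  assumes z0: "rvec z0 \<in> interior ((\<lambda>v. real (codegree P) *\<^sub>R v) ` P)"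
    and v: "k \<ge> 1" "rvec vx \<in> interior ((\<lambda>v. real k *\<^sub>R v) ` P)"
    and sums: "z0 + xi = vx + tx" "codegree P + 1 = k + tk"
    and bound: "\<And>F. F facet_of P \<Longrightarrow>
      (real (codegree P) - real tk) * hF P F - 1 \<le> lfun (nF P F) (rvec tx - rvec z0)"
    and tx: "tk = 0 \<Longrightarrow> tx = 0"
  shows "rvec xi \<in> floor_remainder_sums P"
proof -
  have "codegree P \<le> k" using codegree_le[OF v] .
  then consider "tk = 1" "k = codegree P" | "tk = 0" "k = codegree P + 1"
    using sums(2) by linarith
  then show ?thesis
  proof cases
    case 1
    have "xi = vx + (tx - z0)"
      using sums(1) by (simp add: algebra_simps)
    then have "rvec xi = rvec vx + rvec (tx - z0)" by (simp only: rvec_add)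
    moreover have "(real (codegree P) - 1) * hF P F - 1 \<le> lfun (nF P F) (rvec (tx - z0))"
      if "F facet_of P" for F
      using bound[OF that] 1 by simp
    ultimately show ?thesis
      unfolding floor_remainder_sums_iff using v 1 by (intro exI conjI) (auto simp del: rvec_diff)
  next
    case 2
    have "xi = z0 + (vx - z0 - z0)"
      using sums(1) tx[OF 2(1)] by (simp add: algebra_simps)
    then have "rvec xi = rvec z0 + rvec (vx - z0 - z0)" by (simp only: rvec_add)
    moreover have "(real (codegree P) - 1) * hF P F - 1 \<le> lfun (nF P F) (rvec (vx - z0 - z0))"
      if F: "F facet_of P" for F
    proof -
      have "1 - real k * hF P F \<le> lfun (nF P F) (rvec vx)"
        using lfun_nF_interior_lattice_ge[OF v(2) _ v(1) F] by simp
      moreover have "real (codegree P) * hF P F - 1 \<le> - lfun (nF P F) (rvec z0)"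
        using bound[OF F] 2 tx[OF 2(1)] by (simp add: lfun_uminus)
      moreover have "lfun (nF P F) (rvec (vx - z0 - z0)) =
          lfun (nF P F) (rvec vx) - lfun (nF P F) (rvec z0) - lfun (nF P F) (rvec z0)"
        by (simp only: rvec_diff lfun_diff)
      ultimately show ?thesis using 2 by (simp add: algebra_simps)
    qed
    ultimately show ?thesis
      unfolding floor_remainder_sums_iff using z0 by (intro exI conjI) (auto simp del: rvec_diff)
  qed
qed

lemma nearly_gorenstein_exponent_decomposition:
  fixes K :: "'k::field itself"
  assumes "nearly_gorenstein K P" "rvec xi \<in> P" "e \<in> int_cone_pts P"
  obtains \<phi> v t where "\<phi> \<in> hom_omega K P" "v \<in> int_cone_pts P"
    "t \<in> Poly_Mapping.keys (\<phi> (Poly_Mapping.single e 1))" "e + (xi, 1) = v + t"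
proof -
  have "Poly_Mapping.single (xi, 1) (1::'k) \<in> max_ideal K P"
    using assms(2) by (auto simp: max_ideal_def cone_pts_def lookup_single)
  then have "Poly_Mapping.single (xi, 1) (1::'k) \<in> trace_omega K P"
    using assms(1) by (auto simp: nearly_gorenstein_def)
  moreover have "(xi, 1) \<in> Poly_Mapping.keys (Poly_Mapping.single (xi, 1) (1::'k))"
    by simp
  ultimately obtain \<phi> w where \<phi>: "\<phi> \<in> hom_omega K P" "w \<in> canonical_module K P"
    "(xi, 1) \<in> Poly_Mapping.keys (\<phi> w)"
    by (rule keys_trace_omega)
  obtain v t where "v \<in> Poly_Mapping.keys w"
    "t \<in> Poly_Mapping.keys (\<phi> (Poly_Mapping.single e 1))" "e + (xi, 1) = v + t"
    by (rule keys_hom_omega_shift[OF \<phi>(1) assms(3) \<phi>(2,3)])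
  moreover from this(1) have "v \<in> int_cone_pts P"
    using \<phi>(2) by (auto simp: canonical_module_def)
  ultimately show ?thesis using that \<phi>(1) by blast
qed

lemma nearly_gorenstein_imp_floor_remainder_sums:
  fixes K :: "'k::field itself"
  assumes "nearly_gorenstein K P"
  shows "P \<inter> lattice_pts = floor_remainder_sums P"
proof
  show "floor_remainder_sums P \<subseteq> P \<inter> lattice_pts" by (rule floor_remainder_sums_subset)
  show "P \<inter> lattice_pts \<subseteq> floor_remainder_sums P"
  proof
    fix x assume "x \<in> P \<inter> lattice_pts"
    then obtain xi where xi: "x = rvec xi" "rvec xi \<in> P"
      by (auto simp: lattice_pts_eq_range_rvec)
    obtain z0 where z0: "rvec z0 \<in> interior ((\<lambda>v. real (codegree P) *\<^sub>R v) ` P)"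
      using codegree_interior_lattice_point by blast
    then have e: "(z0, codegree P) \<in> int_cone_pts P"
      using codegree_ge_1 by (simp add: int_cone_pts_def)
    obtain \<phi> vx k tx tk where \<phi>: "\<phi> \<in> hom_omega K P" and v: "(vx, k) \<in> int_cone_pts P"
      and t: "(tx, tk) \<in> Poly_Mapping.keys (\<phi> (Poly_Mapping.single (z0, codegree P) 1))"
      and sum_eq: "(z0, codegree P) + (xi, 1) = (vx, k) + (tx, tk)"
      using nearly_gorenstein_exponent_decomposition[OF assms xi(2) e] by (metis surj_pair)
    have "Poly_Mapping.single (z0, codegree P) (1::'k) \<in> canonical_module K P"
      using e by (simp add: canonical_module_def)
    then have "(tx, tk) \<in> cone_pts P"
      using keys_hom_omega_subset[OF \<phi>] t by blast
    then have "tk = 0 \<Longrightarrow> tx = 0" using cone_pts_zero_level by blast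
    then show "x \<in> floor_remainder_sums P"
      unfolding xi(1)
      using floor_remainder_sums_memI[OF z0, of k vx xi tx tk] hom_omega_key_bound[OF \<phi> e t]
        sum_eq v
      by (auto simp: int_cone_pts_def)
  qed
qed

lemma lfun_nF_sum_list_ge:
  assumes "set xs \<subseteq> P" "F facet_of P"
  shows "- real (length xs) * hF P F \<le> lfun (nF P F) (sum_list xs)"
  using assms(1)
proof (induction xs)
  case (Cons x xs)
  then show ?case using lfun_nF_ge[OF assms(2), of x] by (simp add: lfun_add algebra_simps)
qed (simp add: lfun_def)

lemma int_cone_pts_level_ge_codegree: "(x, k) \<in> int_cone_pts P \<Longrightarrow> codegree P \<le> k"
  using codegree_le by (auto simp: int_cone_pts_def)

lemma remainder_shift_int_cone_pts:
  assumes y: "rvec yi \<in> remainder_poly P \<inter> lattice_pts"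
    and k: "(- yi + kx, codegree P - 1 + kj) \<in> int_cone_pts P"
  shows "(kx, kj) \<in> cone_pts P"
proof -
  have level: "codegree P - 1 + kj \<ge> 1"
    and interior: "rvec (- yi + kx) \<in> interior ((\<lambda>v. real (codegree P - 1 + kj) *\<^sub>R v) ` P)"
    using k by (auto simp: int_cone_pts_def)
  have "kj \<ge> 1" using int_cone_pts_level_ge_codegree[OF k] codegree_ge_1 by linarith
  have "- real kj * hF P F \<le> lfun (nF P F) (rvec kx)" if F: "F facet_of P" for F
  proof -
    have "1 - real (codegree P - 1 + kj) * hF P F \<le> lfun (nF P F) (rvec (- yi + kx))"
      by (rule lfun_nF_interior_lattice_ge[OF interior rvec_in_lattice_pts level F])
    moreover have "(real (codegree P) - 1) * hF P F - 1 \<le> lfun (nF P F) (rvec yi)"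
      using remainder_poly_lattice_pts_iff[THEN iffD1, OF y] F by blast
    moreover have "real (codegree P - 1 + kj) = real (codegree P) - 1 + real kj"
      using codegree_ge_1 by simp
    ultimately show ?thesis by (simp only: rvec_add rvec_uminus lfun_add lfun_uminus) argo
  qed
  then show ?thesis
    using \<open>kj \<ge> 1\<close> by (simp add: cone_pts_def scaled_P_iff)
qed

text \<open>\<open>Poly_Mapping.map_key ((+) c)\<close> moves the coefficient at exponent \<open>c + e\<close> to \<open>e\<close>, so with
  \<open>c = (-y, a - 1)\<close> it is multiplication by the Laurent monomial \<open>t\<^sup>y s\<^sup>1\<^sup>-\<^sup>a\<close>.\<close>

lemma remainder_shift_hom_omega:
  fixes K :: "'k::field itself"
  assumes y: "rvec yi \<in> remainder_poly P \<inter> lattice_pts"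
  shows "Poly_Mapping.map_key ((+) (- yi, codegree P - 1)) \<in> hom_omega K P"
proof -
  define c where "c = (- yi, codegree P - 1)"
  have inj: "inj ((+) c)" by simp
  have keys_shift: "Poly_Mapping.keys w \<subseteq> range ((+) c)"
    if "w \<in> canonical_module K P" for w :: "((int^'n) \<times> nat) \<Rightarrow>\<^sub>0 'k"
  proof
    fix k assume k: "k \<in> Poly_Mapping.keys w"
    obtain kx kj where k_eq: "k = (kx, kj)" by (cases k)
    have "(kx, kj) \<in> int_cone_pts P"
      using that k k_eq by (auto simp: canonical_module_def)
    then have "codegree P \<le> kj" by (rule int_cone_pts_level_ge_codegree)
    then have "k = c + (yi + kx, kj - (codegree P - 1))"
      using codegree_ge_1 k_eq by (simp add: c_def)
    then show "k \<in> range ((+) c)" by blast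
  qed
  have ring: "Poly_Mapping.map_key ((+) c) w \<in> ehrhart_ring K P"
    if w: "w \<in> canonical_module K P" for w :: "((int^'n) \<times> nat) \<Rightarrow>\<^sub>0 'k"
  proof -
    have "(kx, kj) \<in> cone_pts P"
      if "(kx, kj) \<in> Poly_Mapping.keys (Poly_Mapping.map_key ((+) c) w)" for kx kj
    proof (rule remainder_shift_int_cone_pts[OF y])
      have "c + (kx, kj) \<in> Poly_Mapping.keys w"
        using that by (simp add: keys_map_key[OF inj])
      then show "(- yi + kx, codegree P - 1 + kj) \<in> int_cone_pts P"
        using w by (auto simp: c_def canonical_module_def)
    qed
    then show ?thesis by (auto simp: ehrhart_ring_def)
  qed
  show ?thesis
    unfolding hom_omega_def c_def[symmetric]
    using ring map_key_plus[OF inj] map_key_add_mult[OF keys_shift] by blast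
qed

lemma cone_pts_split_remainder:
  assumes idp: "IDP P" and dec: "P \<inter> lattice_pts = floor_remainder_sums P"
    and k: "(xi, j) \<in> cone_pts P" "j \<ge> 1"
  obtains yi where "rvec yi \<in> remainder_poly P \<inter> lattice_pts"
    "(xi - yi, codegree P + j - 1) \<in> int_cone_pts P"
proof -
  have "rvec xi \<in> (\<lambda>v. real j *\<^sub>R v) ` P \<inter> lattice_pts"
    using k(1) by (simp add: cone_pts_def)
  then obtain xs where xs: "length xs = j" "set xs \<subseteq> P \<inter> lattice_pts" "sum_list xs = rvec xi"
    using idp k(2) unfolding IDP_def by blast
  then obtain x1 rest where xs_eq: "xs = x1 # rest" using k(2) by (cases xs) auto
  then have "x1 \<in> floor_remainder_sums P" using xs(2) dec by simp
  then obtain x' y where x1: "x1 = x' + y"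
    and x': "x' \<in> interior ((\<lambda>v. real (codegree P) *\<^sub>R v) ` P)"
    and y: "y \<in> remainder_poly P \<inter> lattice_pts"
    unfolding floor_remainder_sums_def floor_poly_codegree_lattice_pts by blast
  obtain yi where yi: "y = rvec yi" using y by (auto simp: lattice_pts_eq_range_rvec)
  have rvec_w: "rvec (xi - yi) = x' + sum_list rest"
    using xs(3) xs_eq x1 yi by (auto simp: algebra_simps)
  have level: "real (codegree P + j - 1) = real (codegree P) + (real j - 1)"
    using k(2) by simp
  have "- real (codegree P + j - 1) * hF P F < lfun (nF P F) (rvec (xi - yi))"
    if F: "F facet_of P" for F
  proof -
    have "- real (codegree P) * hF P F < lfun (nF P F) x'"
      using x' interior_scaled_P_iff[of "real (codegree P)"] codegree_ge_1 F by auto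
    moreover have "- (real j - 1) * hF P F \<le> lfun (nF P F) (sum_list rest)"
      using lfun_nF_sum_list_ge[of rest F] xs xs_eq F by auto
    ultimately show ?thesis unfolding rvec_w lfun_add level by (simp add: algebra_simps)
  qed
  then have "(xi - yi, codegree P + j - 1) \<in> int_cone_pts P"
    using codegree_ge_1 k(2) by (simp add: int_cone_pts_def interior_scaled_P_iff del: rvec_diff)
  then show ?thesis using that y yi by blast
qed

lemma monomial_mem_trace_omega:
  fixes K :: "'k::field itself"
  assumes idp: "IDP P" and dec: "P \<inter> lattice_pts = floor_remainder_sums P"
    and k: "(xi, j) \<in> cone_pts P" "(xi, j) \<noteq> (0, 0)"
  shows "Poly_Mapping.single (xi, j) (c::'k) \<in> trace_omega K P"
proof -
  have "j \<ge> 1" using k cone_pts_zero_level by (cases j) auto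
  then obtain yi where y: "rvec yi \<in> remainder_poly P \<inter> lattice_pts"
    and w: "(xi - yi, codegree P + j - 1) \<in> int_cone_pts P"
    by (rule cone_pts_split_remainder[OF idp dec k(1)])
  define \<phi> :: "(((int^'n) \<times> nat) \<Rightarrow>\<^sub>0 'k) \<Rightarrow> (((int^'n) \<times> nat) \<Rightarrow>\<^sub>0 'k)"
    where "\<phi> = Poly_Mapping.map_key ((+) (- yi, codegree P - 1))"
  have "(xi - yi, codegree P + j - 1) = (- yi, codegree P - 1) + (xi, j)"
    using codegree_ge_1 \<open>j \<ge> 1\<close> by simp
  then have "\<phi> (Poly_Mapping.single (xi - yi, codegree P + j - 1) c) =
      Poly_Mapping.single (xi, j) c"
    unfolding \<phi>_def by (simp only:) (rule map_key_single, simp)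
  moreover have "\<phi> \<in> hom_omega K P"
    unfolding \<phi>_def by (rule remainder_shift_hom_omega[OF y])
  moreover have "Poly_Mapping.single (xi - yi, codegree P + j - 1) c \<in> canonical_module K P"
    using w by (simp add: canonical_module_def)
  ultimately show ?thesis
    unfolding trace_omega_def
    by (intro CollectI exI[of _ "[(\<phi>, Poly_Mapping.single (xi - yi, codegree P + j - 1) c)]"])
      auto
qed

lemma floor_remainder_sums_imp_nearly_gorenstein:
  fixes K :: "'k::field itself"
  assumes "IDP P" "P \<inter> lattice_pts = floor_remainder_sums P"
  shows "nearly_gorenstein K P"
  unfolding nearly_gorenstein_def
proof
  fix f :: "((int^'n) \<times> nat) \<Rightarrow>\<^sub>0 'k" assume f: "f \<in> max_ideal K P"
  have "Poly_Mapping.single k (Poly_Mapping.lookup f k) \<in> trace_omega K P"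
    if "k \<in> Poly_Mapping.keys f" for k
  proof -
    have "k \<in> cone_pts P" "k \<noteq> (0, 0)"
      using f that by (auto simp: max_ideal_def in_keys_iff)
    then show ?thesis using monomial_mem_trace_omega[OF assms, of "fst k" "snd k"] by simp
  qed
  then have "(\<Sum>k\<in>Poly_Mapping.keys f. Poly_Mapping.single k (Poly_Mapping.lookup f k))
      \<in> trace_omega K P"
    by (rule trace_omega_sum)
  then show "f \<in> trace_omega K P" by (simp add: poly_mapping_sum_single)
qed

end

theorem lemma3p4:
  fixes P :: "(real^'n) set" and K :: "'k::field itself"
  assumes "infinite (UNIV :: 'k set)"
    and "lattice_polytope P"
    and "interior P \<noteq> {}"
  shows "floor_poly ((\<lambda>v. real (codegree P) *\<^sub>R v) ` P) \<subseteq>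
           {x. \<forall>F. F facet_of P \<longrightarrow> lfun (nF P F) x \<ge> 1 - real (codegree P) * hF P F}
       \<and> remainder_poly P \<subseteq>
           {x. \<forall>F. F facet_of P \<longrightarrow> lfun (nF P F) x \<ge> (real (codegree P) - 1) * hF P F - 1}
       \<and> (nearly_gorenstein K P \<longrightarrow>
           P \<inter> lattice_pts = {x + y | x y. x \<in> floor_poly ((\<lambda>v. real (codegree P) *\<^sub>R v) ` P) \<inter> lattice_pts
                                          \<and> y \<in> remainder_poly P \<inter> lattice_pts})
       \<and> (IDP P \<and>
          P \<inter> lattice_pts = {x + y | x y. x \<in> floor_poly ((\<lambda>v. real (codegree P) *\<^sub>R v) ` P) \<inter> lattice_pts
                                          \<and> y \<in> remainder_poly P \<inter> lattice_pts} \<longrightarrow>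
          nearly_gorenstein K P)"
proof -
  obtain S where "finite S" "S \<subseteq> lattice_pts" "P = convex hull S"
    using assms(2) by (auto simp: lattice_polytope_def)
  then interpret full_lattice_polytope P S
    using assms(3) by unfold_locales
  show ?thesis
    using floor_poly_subset remainder_poly_subset
      nearly_gorenstein_imp_floor_remainder_sums[of K]
      floor_remainder_sums_imp_nearly_gorenstein[of K]
    unfolding floor_remainder_sums_def by blast
qed

end
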